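(* Let $\mathbb{S}=(S,\Sigma,\{\tau_a\mid a\in L\})$ be a labelled Markov process. Then $\mathcal{R}^T(\sigma(\llbracket\mathcal{L}\rrbracket))=\mathcal{R}(\sigma(\llbracket\mathcal{L}\rrbracket))$.
   Context: A labelled Markov process (LMP) is a triple $\mathbb{S}=(S,\Sigma,\{\tau_a\mid a\in L\})$ where $(S,\Sigma)$ is a measurable space, $L$ is a countable set of labels, and each $\tau_a:S\times\Sigma\to[0,1]$ is a Markov kernel: $\tau_a(s,\cdot)$ is a subprobability measure on $\Sigma$ for every $s\in S$, and $\tau_a(\cdot,X)$ is $\Sigma$-measurable for every $X\in\Sigma$. For a family $\Gamma\subseteq\mathcal{P}(S)$, $\mathcal{R}(\Gamma)=\{(s,t)\in S\times S:\forall A\in\Gamma\ (s\in A\iff t\in A)\}$. For $\Lambda\subseteq\Sigma$, $\mathcal{R}^T(\Lambda)=\{(s,t)\in S\times S:\forall a\in L\ \forall E\in\Lambda\ \tau_a(s,E)=\tau_a(t,E)\}$. The logic $\mathcal{L}$ has formulas $\phi::=\top\mid\phi_1\wedge\phi_2\mid\langle a\rangle_{>q}\phi$ with $a\in L$ and $q\in\mathbb{Q}\cap[0,1]$, interpreted by $\llbracket\top\rrbracket=S$, $\llbracket\phi\wedge\psi\rrbracket=\llbracket\phi\rrbracket\cap\llbracket\psi\rrbracket$, $\llbracket\langle a\rangle_{>q}\phi\rrbracket=\{s\in S:\tau_a(s,\llbracket\phi\rrbracket)>q\}$ (all these sets lie in $\Sigma$). $\sigma(\llbracket\mathcal{L}\rrbracket)$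 denotes the $\sigma$-algebra generated by all sets $\llbracket\phi\rrbracket$. *)

theory Defs
  imports "HOL-Probability.Probability"
begin

text \<open>A labelled Markov process on the measurable space M with countable label type 'l:
  each tau a is a Markov kernel, i.e. a measurable map from M into the space of
  subprobability measures on M (this encodes both that tau a s is a subprobability
  measure on the sets of M and that s maps to tau a s (X) measurably).\<close>
definition LMP :: "'a measure \<Rightarrow> ('l::countable \<Rightarrow> 'a \<Rightarrow> 'a measure) \<Rightarrow> bool" where
  "LMP M tau \<longleftrightarrow> (\<forall>a. tau a \<in> M \<rightarrow>\<^sub>M subprob_algebra M)"

datatype 'l form = FTop | FAnd "'l form" "'l form" | FDia 'l rat "'l form"

fun wf_form :: "'l form \<Rightarrow> bool" where
  "wf_form FTop = True"
| "wf_form (FAnd p1 p2) = (wf_form p1 \<and> wf_form p2)"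
| "wf_form (FDia a q p) = (0 \<le> q \<and> q \<le> 1 \<and> wf_form p)"

fun sem :: "'a measure \<Rightarrow> ('l \<Rightarrow> 'a \<Rightarrow> 'a measure) \<Rightarrow> 'l form \<Rightarrow> 'a set" where
  "sem M tau FTop = space M"
| "sem M tau (FAnd p1 p2) = sem M tau p1 \<inter> sem M tau p2"
| "sem M tau (FDia a q p) =
     {s \<in> space M. measure (tau a s) (sem M tau p) > real_of_rat q}"

definition sigma_L :: "'a measure \<Rightarrow> ('l \<Rightarrow> 'a \<Rightarrow> 'a measure) \<Rightarrow> 'a set set" where
  "sigma_L M tau = sigma_sets (space M) {sem M tau p | p. wf_form p}"

definition Rel :: "'a set \<Rightarrow> 'a set set \<Rightarrow> ('a \<times> 'a) set" where
  "Rel S Fam = {(s, t). s \<in> S \<and> t \<in> S \<and> (\<forall>A\<in>Fam. s \<in> A \<longleftrightarrow> t \<in> A)}"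

definition RelT :: "'a measure \<Rightarrow> ('l \<Rightarrow> 'a \<Rightarrow> 'a measure) \<Rightarrow> 'a set set \<Rightarrow> ('a \<times> 'a) set" where
  "RelT M tau Lam = {(s, t). s \<in> space M \<and> t \<in> space M \<and>
     (\<forall>a. \<forall>E\<in>Lam. measure (tau a s) E = measure (tau a t) E)}"

end

theory Submission
  imports Defs
begin

(* States related by RelT satisfy the same formulas (induction on formulas), and the sets
   not separating two points form a sigma-algebra, so such states agree on all of sigma(L).
   Conversely, states agreeing on sigma(L) agree on every <a>_{>q} phi, so the numbers
   tau_a(s,[phi]) and tau_a(t,[phi]) have the same rational lower bounds and coincide; the
   denotations form an intersection-stable generator containing S, so by Dynkin's argument
   the two finite measures agree on the whole generated sigma-algebra. *)

lemma sigma_sets_mem_cong: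
  assumes "s \<in> \<Omega>" "t \<in> \<Omega>"
    and "\<And>A. A \<in> G \<Longrightarrow> s \<in> A \<longleftrightarrow> t \<in> A"
    and "A \<in> sigma_sets \<Omega> G"
  shows "s \<in> A \<longleftrightarrow> t \<in> A"
  using assms(4)
proof (induction rule: sigma_sets.induct)
  case (Union F)
  then show ?case by auto
qed (use assms in auto)

lemma finite_measure_eq_on_sigma_sets:
  assumes M: "finite_measure M" and N: "finite_measure N" and sets_eq: "sets M = sets N"
    and G: "Int_stable G" "G \<subseteq> sets M" "space M \<in> G"
    and eq: "\<And>X. X \<in> G \<Longrightarrow> emeasure M X = emeasure N X"
    and A: "A \<in> sigma_sets (space M) G"
  shows "emeasure M A = emeasure N A"
proof -
  interpret M: finite_measure M by (fact M)
  interpret N: finite_measure N by (fact N)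
  have space_eq: "space N = space M"
    using sets_eq by (rule sets_eq_imp_space_eq[symmetric])
  have sigma_G: "sigma_sets (space M) G \<subseteq> sets M"
    using G(2) by (rule sets.sigma_sets_subset)
  have "G \<subseteq> Pow (space M)" using G(2) sets.sets_into_space by blast
  from G(1) this A show ?thesis
  proof (induction rule: sigma_sets_induct_disjoint)
    case (basic A)
    then show ?case by (fact eq)
  next
    case (compl A)
    then have "A \<in> sets M" using sigma_G by blast
    then show ?case
      using compl.IH eq[OF G(3)] sets_eq space_eq
      by (simp add: M.emeasure_eq_measure N.emeasure_eq_measure M.finite_measure_compl
          N.finite_measure_compl[unfolded space_eq])
  next
    case (union A)
    then have "range A \<subseteq> sets M" using sigma_G by blast
    then show ?case
      using union.hyps union.IH sets_eq
      by (simp add: suminf_emeasure[symmetric])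
  qed simp
qed

lemma eq_if_same_rat_lower_bounds:
  fixes x y :: real
  assumes "0 \<le> x" "x \<le> 1" "0 \<le> y" "y \<le> 1"
    and same: "\<And>q. 0 \<le> q \<Longrightarrow> q \<le> 1 \<Longrightarrow> real_of_rat q < x \<longleftrightarrow> real_of_rat q < y"
  shows "x = y"
proof -
  have False if "u < v" "0 \<le> u" "v \<le> 1"
    and "\<And>q. 0 \<le> q \<Longrightarrow> q \<le> 1 \<Longrightarrow> real_of_rat q < u \<longleftrightarrow> real_of_rat q < v" for u v :: real
  proof -
    obtain q where q: "u < real_of_rat q" "real_of_rat q < v"
      using of_rat_dense[OF \<open>u < v\<close>] by blast
    then have "0 \<le> q" "q \<le> 1"
      using that(2,3) by (smt (verit) of_rat_less_eq of_rat_0 of_rat_1)+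
    with q that(4)[of q] show False by linarith
  qed
  with assms show ?thesis by (metis linorder_neqE_linordered_idom)
qed

lemma LMP_kernel: "LMP M tau \<Longrightarrow> tau a \<in> M \<rightarrow>\<^sub>M subprob_algebra M"
  by (simp add: LMP_def)

lemma sets_sem:
  assumes "LMP M tau"
  shows "sem M tau p \<in> sets M"
proof (induction p)
  case (FDia a q p)
  have "(\<lambda>s. measure (tau a s) (sem M tau p)) \<in> borel_measurable M"
    using measurable_compose[OF LMP_kernel[OF assms] measurable_measure_subprob_algebra[OF FDia]] .
  then show ?case by simp
qed auto

lemma sem_in_sigma_L: "wf_form p \<Longrightarrow> sem M tau p \<in> sigma_L M tau"
  unfolding sigma_L_def by (auto intro: sigma_sets.Basic)

lemma Int_stable_sem: "Int_stable {sem M tau p | p. wf_form p}"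
proof (rule Int_stableI)
  fix A B assume "A \<in> {sem M tau p | p. wf_form p}" "B \<in> {sem M tau p | p. wf_form p}"
  then obtain p1 p2 where "A = sem M tau p1" "wf_form p1" "B = sem M tau p2" "wf_form p2"
    by auto
  then show "A \<inter> B \<in> {sem M tau p | p. wf_form p}"
    by (auto intro!: exI[of _ "FAnd p1 p2"])
qed

lemma sem_mem_cong_of_RelT:
  assumes "(s, t) \<in> RelT M tau (sigma_L M tau)" "wf_form p"
  shows "s \<in> sem M tau p \<longleftrightarrow> t \<in> sem M tau p"
  using assms(2)
proof (induction p)
  case (FDia a q p)
  then have "sem M tau p \<in> sigma_L M tau" by (simp add: sem_in_sigma_L)
  then have "measure (tau a s) (sem M tau p) = measure (tau a t) (sem M tau p)"
    using assms(1) by (auto simp: RelT_def)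
  then show ?case using assms(1) by (auto simp: RelT_def)
qed (use assms(1) in \<open>auto simp: RelT_def\<close>)

lemma measure_sem_eq_of_Rel:
  assumes "LMP M tau" "(s, t) \<in> Rel (space M) (sigma_L M tau)" "wf_form p"
  shows "measure (tau a s) (sem M tau p) = measure (tau a t) (sem M tau p)"
proof (rule eq_if_same_rat_lower_bounds)
  have s: "s \<in> space M" and t: "t \<in> space M" using assms(2) by (auto simp: Rel_def)
  interpret S: subprob_space "tau a s" using subprob_space_kernel[OF LMP_kernel[OF assms(1)] s] .
  interpret T: subprob_space "tau a t" using subprob_space_kernel[OF LMP_kernel[OF assms(1)] t] .
  show "0 \<le> measure (tau a s) (sem M tau p)" "measure (tau a s) (sem M tau p) \<le> 1"
    "0 \<le> measure (tau a t) (sem M tau p)" "measure (tau a t) (sem M tau p) \<le> 1"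
    by (auto intro: S.subprob_measure_le_1 T.subprob_measure_le_1)
  fix q :: rat assume "0 \<le> q" "q \<le> 1"
  then have "sem M tau (FDia a q p) \<in> sigma_L M tau"
    using assms(3) by (intro sem_in_sigma_L) simp
  then have "s \<in> sem M tau (FDia a q p) \<longleftrightarrow> t \<in> sem M tau (FDia a q p)"
    using assms(2) by (auto simp: Rel_def)
  then show "real_of_rat q < measure (tau a s) (sem M tau p)
      \<longleftrightarrow> real_of_rat q < measure (tau a t) (sem M tau p)"
    using s t by simp
qed

lemma RelT_subset_Rel: "RelT M tau (sigma_L M tau) \<subseteq> Rel (space M) (sigma_L M tau)"
proof clarify
  fix s t assume st: "(s, t) \<in> RelT M tau (sigma_L M tau)"
  then have s: "s \<in> space M" and t: "t \<in> space M" by (auto simp: RelT_def)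
  have "s \<in> A \<longleftrightarrow> t \<in> A" if "A \<in> sigma_L M tau" for A
    using sem_mem_cong_of_RelT[OF st]
    by (intro sigma_sets_mem_cong[OF s t _ that[unfolded sigma_L_def]]) auto
  with s t show "(s, t) \<in> Rel (space M) (sigma_L M tau)"
    by (auto simp: Rel_def)
qed

lemma emeasure_eq_of_Rel:
  assumes "LMP M tau" and st: "(s, t) \<in> Rel (space M) (sigma_L M tau)"
    and E: "E \<in> sigma_L M tau"
  shows "emeasure (tau a s) E = emeasure (tau a t) E"
proof (rule finite_measure_eq_on_sigma_sets)
  have s: "s \<in> space M" and t: "t \<in> space M" using st by (auto simp: Rel_def)
  note kernel = LMP_kernel[OF assms(1), of a]
  show fin: "finite_measure (tau a s)" "finite_measure (tau a t)"
    using subprob_space_kernel[OF kernel] s t by (auto simp: subprob_space_def)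
  let ?G = "{sem M tau p | p. wf_form p}"
  have G: "?G \<subseteq> sets M" "space M \<in> ?G"
    using sets_sem[OF assms(1)] by (auto intro!: exI[of _ FTop])
  then show "sets (tau a s) = sets (tau a t)" "?G \<subseteq> sets (tau a s)" "space (tau a s) \<in> ?G"
    "E \<in> sigma_sets (space (tau a s)) ?G"
    using subprob_measurableD[OF kernel] s t E by (auto simp: sigma_L_def)
  show "emeasure (tau a s) X = emeasure (tau a t) X" if "X \<in> ?G" for X
    using that measure_sem_eq_of_Rel[OF assms(1) st]
    by (auto simp: finite_measure.emeasure_eq_measure[OF fin(1)]
        finite_measure.emeasure_eq_measure[OF fin(2)])
qed (rule Int_stable_sem)

lemma Rel_subset_RelT:
  assumes "LMP M tau"
  shows "Rel (space M) (sigma_L M tau) \<subseteq> RelT M tau (sigma_L M tau)"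
proof clarify
  fix s t assume st: "(s, t) \<in> Rel (space M) (sigma_L M tau)"
  then have "measure (tau a s) E = measure (tau a t) E" if "E \<in> sigma_L M tau" for a E
    using emeasure_eq_of_Rel[OF assms st that] by (simp add: measure_def)
  with st show "(s, t) \<in> RelT M tau (sigma_L M tau)"
    by (auto simp: Rel_def RelT_def)
qed

theorem lemma3p4:
  fixes M :: "'a measure" and tau :: "'l::countable \<Rightarrow> 'a \<Rightarrow> 'a measure"
  assumes "LMP M tau"
  shows "RelT M tau (sigma_L M tau) = Rel (space M) (sigma_L M tau)"
  using RelT_subset_Rel Rel_subset_RelT[OF assms] by (rule equalityI)

end
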